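(* Let $(F,G)\in\mathcal H_{\mathbf d}[q\,;\,s]$ and $D=\max_i d_i$. For any $r>0$, $\mathcal U_{\mathbb S}\big(S(F,G),D^{-1/2}r\big)\subseteq\mathsf{Approx}(F,G,r)$.
   Context: $\mathcal H_{\mathbf d}[q\,;\,s]$: pairs $(F,G)$, $F=(f_1,\dots,f_q)$, $G=(g_1,\dots,g_s)$, of real homogeneous polynomials in $X_0,\dots,X_n$ of degrees $d_1,\dots,d_{q+s}$; each polynomial $h$ has the Weyl norm $\|h\|$ where $\|h\|^2=\sum_{|a|=d}\binom da^{-1}h_a^2$ ($h_a$ coefficients, $\binom da$ multinomial). $S(F,G)=\{x\in\mathbb S^n: f_i(x)=0\ \forall i,\ g_j(x)\geq0\ \forall j\}$. For $A\subseteq\mathbb S^n$, $\mathcal U_{\mathbb S}(A,r)=\{x\in\mathbb S^n: d_{\mathbb S}(x,A)<r\}$ with $d_{\mathbb S}$ the geodesic distance. $\mathsf{Approx}(F,G,r)=\{x\in\mathbb S^n:\ |f(x)|<\|f\|r\ \forall f\in F,\ g(x)>-\|g\|r\ \forall g\in G\}$. *)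

theory Defs
  imports "HOL-Analysis.Analysis"
begin

text \<open>Real homogeneous polynomials in the variables X_i, i ranging over the finite
  index type 'n (so CARD('n) = n+1 variables X_0..X_n), represented by a degree d
  and a coefficient function on multi-indices a :: 'n => nat with |a| = d.\<close>

type_synonym 'n hpoly = "nat \<times> (('n \<Rightarrow> nat) \<Rightarrow> real)"

definition monomials_deg :: "nat \<Rightarrow> ('n::finite \<Rightarrow> nat) set" where
  "monomials_deg d = {a. sum a UNIV = d}"

definition hdeg :: "'n hpoly \<Rightarrow> nat" where "hdeg h = fst h"

definition hcoeff :: "'n hpoly \<Rightarrow> ('n \<Rightarrow> nat) \<Rightarrow> real" where "hcoeff h = snd h"

definition multinom :: "nat \<Rightarrow> ('n::finite \<Rightarrow> nat) \<Rightarrow> real" where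
  "multinom d a = fact d / (\<Prod>i\<in>UNIV. fact (a i))"

definition heval :: "('n::finite) hpoly \<Rightarrow> real ^ 'n \<Rightarrow> real" where
  "heval h x = (\<Sum>a\<in>monomials_deg (hdeg h). hcoeff h a * (\<Prod>i\<in>UNIV. (x $ i) ^ a i))"

definition weyl_norm :: "('n::finite) hpoly \<Rightarrow> real" where
  "weyl_norm h = sqrt (\<Sum>a\<in>monomials_deg (hdeg h). (hcoeff h a)\<^sup>2 / multinom (hdeg h) a)"

definition hzero :: "('n::finite) hpoly \<Rightarrow> bool" where
  "hzero h \<longleftrightarrow> (\<forall>a\<in>monomials_deg (hdeg h). hcoeff h a = 0)"

definition sphere_n :: "(real ^ 'n::finite) set" where
  "sphere_n = {x. norm x = 1}"

definition dS :: "real ^ 'n::finite \<Rightarrow> real ^ 'n \<Rightarrow> real" where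
  "dS x y = arccos (x \<bullet> y)"

text \<open>Open r-neighbourhood: d_S(x,A) = inf_{y in A} d_S(x,y) < r, with inf of the empty set = infinity.\<close>
definition U_S :: "(real ^ 'n::finite) set \<Rightarrow> real \<Rightarrow> (real ^ 'n) set" where
  "U_S A r = {x \<in> sphere_n. \<exists>y\<in>A. dS x y < r}"

definition SFG :: "('n::finite) hpoly list \<Rightarrow> 'n hpoly list \<Rightarrow> (real ^ 'n) set" where
  "SFG F G = {x \<in> sphere_n. (\<forall>f\<in>set F. heval f x = 0) \<and> (\<forall>g\<in>set G. heval g x \<ge> 0)}"

definition Approx :: "('n::finite) hpoly list \<Rightarrow> 'n hpoly list \<Rightarrow> real \<Rightarrow> (real ^ 'n) set" where
  "Approx F G r = {x \<in> sphere_n. (\<forall>f\<in>set F. \<bar>heval f x\<bar> < weyl_norm f * r) \<and>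
                                  (\<forall>g\<in>set G. heval g x > - (weyl_norm g * r))}"

end

theory Submission imports Defs begin

text \<open>Writing \<open>h(x) = \<Sum>\<^sub>a c\<^sub>a x\<^sup>a\<close>, the Weyl norm is the norm dual to the kernel identity
  \<open>\<Sum>\<^sub>a multinom d a \<cdot> z\<^sup>a w\<^sup>a = \<langle>z,w\<rangle>\<^sup>d\<close>, so by Cauchy--Schwarz \<open>|\<Sum>\<^sub>a c\<^sub>a X\<^sub>a| \<le> \<parallel>h\<parallel> (\<Sum>\<^sub>a multinom d a \<cdot> X\<^sub>a\<^sup>2)\<^sup>1\<^sup>/\<^sup>2\<close>.
  Along a unit-speed great circle \<open>\<gamma>\<close>, differentiating \<open>\<langle>\<gamma>(t),\<gamma>(s)\<rangle>\<^sup>d = cos\<^sup>d(t - s)\<close> once in \<open>t\<close>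
  and once in \<open>s\<close> at \<open>s = t\<close> shows \<open>\<Sum>\<^sub>a multinom d a \<cdot> ((\<gamma>\<^sup>a)'(t))\<^sup>2 = d\<close>.  Hence
  \<open>|(h \<circ> \<gamma>)'| \<le> \<surd>d \<parallel>h\<parallel>\<close>, i.e. \<open>h\<close> is \<open>\<surd>d \<parallel>h\<parallel>\<close>-Lipschitz for the geodesic distance, and a point
  within \<open>r/\<surd>D\<close> of \<open>S(F,G)\<close> changes every \<open>f\<close>, \<open>g\<close> by less than \<open>\<parallel>f\<parallel> r\<close>, \<open>\<parallel>g\<parallel> r\<close>.\<close>

definition multi_indices_on :: "'n set \<Rightarrow> nat \<Rightarrow> ('n \<Rightarrow> nat) set" where
  "multi_indices_on I d = {a. (\<forall>i. i \<notin> I \<longrightarrow> a i = 0) \<and> sum a I = d}"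

lemma finite_multi_indices_on:
  assumes "finite I" shows "finite (multi_indices_on I d)"
proof -
  let ?extend = "\<lambda>f i. if i \<in> I then f i else 0"
  have "multi_indices_on I d \<subseteq> ?extend ` (PiE I (\<lambda>_. {..d}))"
  proof
    fix a assume a: "a \<in> multi_indices_on I d"
    have "restrict a I \<in> PiE I (\<lambda>_. {..d})"
      using a assms by (auto simp: multi_indices_on_def intro!: member_le_sum)
    moreover have "a = ?extend (restrict a I)"
      using a by (auto simp: multi_indices_on_def)
    ultimately show "a \<in> ?extend ` (PiE I (\<lambda>_. {..d}))" by blast
  qed
  then show ?thesis
    using assms by (meson finite_PiE finite_atMost finite_imageI finite_subset)
qed

lemma multinomial_theorem:
  fixes u :: "'n \<Rightarrow> 'a::field_char_0"
  assumes "finite I"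
  shows "(\<Sum>i\<in>I. u i) ^ d =
    (\<Sum>a\<in>multi_indices_on I d. fact d / (\<Prod>i\<in>I. fact (a i)) * (\<Prod>i\<in>I. u i ^ a i))"
  using assms
proof (induction I arbitrary: d rule: finite_induct)
  case empty
  have indices: "multi_indices_on {} d = (if d = 0 then {\<lambda>_. 0} else {})"
    by (auto simp: multi_indices_on_def)
  show ?case
    unfolding indices by simp
next
  case (insert j I)
  let ?T = "\<lambda>k b. of_nat (d choose k) * u j ^ k *
              (fact (d - k) / (\<Prod>i\<in>I. fact (b i)) * (\<Prod>i\<in>I. u i ^ b i))"
  have "(\<Sum>i\<in>insert j I. u i) ^ d = (\<Sum>k\<le>d. of_nat (d choose k) * u j ^ k * (\<Sum>i\<in>I. u i) ^ (d - k))"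
    using insert.hyps by (simp add: binomial_ring)
  also have "\<dots> = (\<Sum>k\<le>d. \<Sum>b\<in>multi_indices_on I (d - k). ?T k b)"
    by (simp add: insert.IH sum_distrib_left)
  also have "\<dots> = (\<Sum>(k,b)\<in>Sigma {..d} (\<lambda>k. multi_indices_on I (d - k)). ?T k b)"
    by (rule sum.Sigma) (auto intro: finite_multi_indices_on insert.hyps)
  also have "\<dots> = (\<Sum>a\<in>multi_indices_on (insert j I) d.
                     fact d / (\<Prod>i\<in>insert j I. fact (a i)) * (\<Prod>i\<in>insert j I. u i ^ a i))"
  proof (rule sum.reindex_bij_witness[where i = "\<lambda>a. (a j, a(j:=0))" and j = "\<lambda>(k,b). b(j:=k)"])
    fix kb assume kb: "kb \<in> Sigma {..d} (\<lambda>k. multi_indices_on I (d - k))"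
    obtain k b where kbd: "kb = (k,b)" by force
    have k: "k \<le> d" and b: "\<forall>i. i \<notin> I \<longrightarrow> b i = 0" "sum b I = d - k"
      using kb kbd by (auto simp: multi_indices_on_def)
    have "b j = 0" using b insert.hyps by auto
    then show "(\<lambda>a. (a j, a(j:=0))) ((\<lambda>(k,b). b(j:=k)) kb) = kb"
      using kbd by auto
    have "sum (b(j:=k)) I = sum b I"
      by (rule sum.cong) (use insert.hyps in auto)
    then show "(\<lambda>(k,b). b(j:=k)) kb \<in> multi_indices_on (insert j I) d"
      using kbd b k insert.hyps by (auto simp: multi_indices_on_def)
    have "(\<Prod>i\<in>I. fact ((b(j:=k)) i)) = (\<Prod>i\<in>I. fact (b i) :: 'a)"
      and "(\<Prod>i\<in>I. u i ^ ((b(j:=k)) i)) = (\<Prod>i\<in>I. u i ^ b i)"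
      by (rule prod.cong; use insert.hyps in auto)+
    moreover have "(\<Prod>i\<in>I. fact (b i) :: 'a) \<noteq> 0"
      by (simp add: prod_zero_iff[OF insert.hyps(1)])
    ultimately show "fact d / (\<Prod>i\<in>insert j I. fact (((\<lambda>(k,b). b(j:=k)) kb) i)) *
          (\<Prod>i\<in>insert j I. u i ^ (((\<lambda>(k,b). b(j:=k)) kb) i)) = (case kb of (k,b) \<Rightarrow> ?T k b)"
      using kbd insert.hyps k by (simp add: binomial_fact field_simps)
  next
    fix a assume a: "a \<in> multi_indices_on (insert j I) d"
    have "sum (a(j:=0)) I = sum a I"
      by (rule sum.cong) (use insert.hyps in auto)
    then show "(\<lambda>a. (a j, a(j:=0))) a \<in> Sigma {..d} (\<lambda>k. multi_indices_on I (d - k))"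
      using a insert.hyps by (auto simp: multi_indices_on_def)
  qed auto
  finally show ?case .
qed

lemma monomials_deg_eq_multi_indices_on:
  "monomials_deg d = multi_indices_on (UNIV :: 'n::finite set) d"
  by (auto simp: multi_indices_on_def monomials_deg_def)

lemma finite_monomials_deg: "finite (monomials_deg d :: ('n::finite \<Rightarrow> nat) set)"
  by (simp add: monomials_deg_eq_multi_indices_on finite_multi_indices_on)

lemma multinom_pos: "multinom d a > 0"
  unfolding multinom_def by (intro divide_pos_pos prod_pos) auto

definition monomial :: "('n::finite \<Rightarrow> nat) \<Rightarrow> real^'n \<Rightarrow> real" where
  "monomial a x = (\<Prod>i\<in>UNIV. (x $ i) ^ a i)"

lemma heval_eq_sum_monomial: "heval h x = (\<Sum>a\<in>monomials_deg (hdeg h). hcoeff h a * monomial a x)"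
  by (simp add: heval_def monomial_def)

lemma weyl_kernel:
  fixes z w :: "real^'n::finite"
  shows "(\<Sum>a\<in>monomials_deg d. multinom d a * monomial a z * monomial a w) = (z \<bullet> w) ^ d"
proof -
  have "(z \<bullet> w) ^ d = (\<Sum>i\<in>UNIV. z$i * w$i) ^ d"
    by (simp add: inner_vec_def)
  also have "\<dots> = (\<Sum>a\<in>monomials_deg d. fact d / (\<Prod>i\<in>UNIV. fact (a i)) * (\<Prod>i\<in>UNIV. (z$i * w$i) ^ a i))"
    by (simp add: multinomial_theorem monomials_deg_eq_multi_indices_on)
  finally show ?thesis
    by (simp add: multinom_def monomial_def power_mult_distrib prod.distrib mult.assoc)
qed

lemma weyl_cauchy_schwarz:
  fixes h :: "('n::finite) hpoly" and X :: "('n \<Rightarrow> nat) \<Rightarrow> real"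
  shows "\<bar>\<Sum>a\<in>monomials_deg (hdeg h). hcoeff h a * X a\<bar>
     \<le> weyl_norm h * sqrt (\<Sum>a\<in>monomials_deg (hdeg h). multinom (hdeg h) a * (X a)\<^sup>2)"
proof -
  let ?M = "monomials_deg (hdeg h)" and ?m = "multinom (hdeg h)" and ?c = "hcoeff h"
  have m: "sqrt (?m a) > 0" "(sqrt (?m a))\<^sup>2 = ?m a" for a
    using multinom_pos[of "hdeg h" a] by simp_all
  have "(\<Sum>a\<in>?M. ?c a * X a) = (\<Sum>a\<in>?M. (?c a / sqrt (?m a)) * (sqrt (?m a) * X a))"
  proof (intro sum.cong refl)
    fix a show "?c a * X a = (?c a / sqrt (?m a)) * (sqrt (?m a) * X a)"
      using m[of a] by (simp add: field_simps)
  qed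
  also have "\<dots>\<^sup>2 \<le> (\<Sum>a\<in>?M. (?c a / sqrt (?m a))\<^sup>2) * (\<Sum>a\<in>?M. (sqrt (?m a) * X a)\<^sup>2)"
    by (rule Cauchy_Schwarz_ineq_sum)
  also have "\<dots> = (\<Sum>a\<in>?M. (?c a)\<^sup>2 / ?m a) * (\<Sum>a\<in>?M. ?m a * (X a)\<^sup>2)"
    by (simp only: power_divide power_mult_distrib m(2))
  finally have "sqrt ((\<Sum>a\<in>?M. ?c a * X a)\<^sup>2) \<le> sqrt ((\<Sum>a\<in>?M. (?c a)\<^sup>2 / ?m a) * (\<Sum>a\<in>?M. ?m a * (X a)\<^sup>2))"
    by (rule real_sqrt_le_mono)
  then show ?thesis
    by (simp add: weyl_norm_def real_sqrt_mult)
qed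

lemma weyl_norm_nonneg: "weyl_norm h \<ge> 0"
  unfolding weyl_norm_def using multinom_pos by (auto intro!: sum_nonneg divide_nonneg_pos)

lemma weyl_norm_pos:
  assumes "\<not> hzero h" shows "weyl_norm h > 0"
proof -
  obtain a where a: "a \<in> monomials_deg (hdeg h)" "hcoeff h a \<noteq> 0"
    using assms by (auto simp: hzero_def)
  have "(\<Sum>a\<in>monomials_deg (hdeg h). (hcoeff h a)\<^sup>2 / multinom (hdeg h) a) > 0"
    using a multinom_pos
    by (intro sum_pos2[OF finite_monomials_deg a(1)] divide_pos_pos divide_nonneg_pos ballI) auto
  then show ?thesis by (simp add: weyl_norm_def)
qed

lemma abs_heval_le_weyl_norm:
  assumes "norm z = 1"
  shows "\<bar>heval h z\<bar> \<le> weyl_norm h"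
proof -
  have "(\<Sum>a\<in>monomials_deg (hdeg h). multinom (hdeg h) a * (monomial a z)\<^sup>2) = (z \<bullet> z) ^ hdeg h"
    using weyl_kernel[of "hdeg h" z z] by (simp add: power2_eq_square mult.assoc)
  also have "\<dots> = 1" using assms by (simp add: dot_square_norm)
  finally show ?thesis
    using weyl_cauchy_schwarz[of h "\<lambda>a. monomial a z"] by (simp add: heval_eq_sum_monomial)
qed

definition great_circle :: "real^'n::finite \<Rightarrow> real^'n \<Rightarrow> real \<Rightarrow> real^'n" where
  "great_circle y v t = cos t *\<^sub>R y + sin t *\<^sub>R v"

lemma inner_great_circle:
  assumes "norm y = 1" "norm v = 1" "y \<bullet> v = 0"
  shows "great_circle y v t \<bullet> great_circle y v s = cos (t - s)"
proof -
  have "y \<bullet> y = 1" "v \<bullet> v = 1" "v \<bullet> y = 0"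
    using assms by (simp_all add: dot_square_norm inner_commute)
  then show ?thesis
    by (simp add: great_circle_def inner_add_left inner_add_right assms(3) cos_diff)
qed

definition monomial_circle_deriv :: "real^'n::finite \<Rightarrow> real^'n \<Rightarrow> ('n \<Rightarrow> nat) \<Rightarrow> real \<Rightarrow> real" where
  "monomial_circle_deriv y v a t =
     (\<Sum>i\<in>UNIV. (real (a i) * (great_circle y v t $ i) ^ (a i - 1) * (- sin t * y$i + cos t * v$i))
       * (\<Prod>j\<in>UNIV-{i}. (great_circle y v t $ j) ^ a j))"

lemma has_field_derivative_monomial_great_circle:
  "((\<lambda>t. monomial a (great_circle y v t)) has_field_derivative monomial_circle_deriv y v a t) (at t)"
proof -
  have "((\<lambda>t. \<Prod>i\<in>UNIV. (\<lambda>i t. (cos t * y$i + sin t * v$i) ^ a i) i t) has_field_derivative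
     (\<Sum>i\<in>UNIV. (real (a i) * (cos t * y$i + sin t * v$i) ^ (a i - 1) * (- sin t * y$i + cos t * v$i))
       * (\<Prod>j\<in>UNIV-{i}. (\<lambda>i t. (cos t * y$i + sin t * v$i) ^ a i) j t))) (at t)"
    by (rule has_field_derivative_prod) (auto intro!: derivative_eq_intros simp: algebra_simps)
  then show ?thesis by (simp add: monomial_def monomial_circle_deriv_def great_circle_def)
qed

lemma weyl_kernel_circle_deriv:
  assumes "norm y = 1" "norm v = 1" "y \<bullet> v = 0"
  shows "(\<Sum>a\<in>monomials_deg d. multinom d a * monomial_circle_deriv y v a t * monomial a (great_circle y v s))
        = real d * cos (t - s) ^ (d - 1) * (- sin (t - s))"
proof -
  have "((\<lambda>t. \<Sum>a\<in>monomials_deg d. multinom d a * monomial a (great_circle y v t) * monomial a (great_circle y v s))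
      has_field_derivative
        (\<Sum>a\<in>monomials_deg d. multinom d a * monomial_circle_deriv y v a t * monomial a (great_circle y v s))) (at t)"
    by (intro DERIV_sum DERIV_cmult_right DERIV_cmult has_field_derivative_monomial_great_circle)
  moreover have "((\<lambda>t. cos (t - s) ^ d) has_field_derivative real d * cos (t - s) ^ (d - 1) * (- sin (t - s))) (at t)"
    by (rule derivative_eq_intros refl)+ simp
  ultimately show ?thesis
    by (simp add: weyl_kernel inner_great_circle[OF assms] DERIV_unique)
qed

lemma weyl_sum_monomial_circle_deriv_sq:
  assumes "norm y = 1" "norm v = 1" "y \<bullet> v = 0"
  shows "(\<Sum>a\<in>monomials_deg d. multinom d a * (monomial_circle_deriv y v a t)\<^sup>2) = real d"
proof -
  have "((\<lambda>s. \<Sum>a\<in>monomials_deg d. multinom d a * monomial_circle_deriv y v a t * monomial a (great_circle y v s))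
      has_field_derivative
        (\<Sum>a\<in>monomials_deg d. multinom d a * monomial_circle_deriv y v a t * monomial_circle_deriv y v a t)) (at t)"
    by (intro DERIV_sum DERIV_cmult has_field_derivative_monomial_great_circle)
  moreover have "((\<lambda>s. real d * cos (t - s) ^ (d - 1) * (- sin (t - s))) has_field_derivative real d) (at t)"
    by (rule derivative_eq_intros refl)+ simp
  ultimately have "(\<Sum>a\<in>monomials_deg d. multinom d a * monomial_circle_deriv y v a t * monomial_circle_deriv y v a t)
      = real d"
    unfolding weyl_kernel_circle_deriv[OF assms] by (rule DERIV_unique)
  then show ?thesis
    by (simp add: power2_eq_square mult.assoc)
qed

lemma heval_great_circle_deriv:
  assumes "norm y = 1" "norm v = 1" "y \<bullet> v = 0"
  obtains h' where "\<And>t. ((\<lambda>t. heval h (great_circle y v t)) has_field_derivative h' t) (at t)"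
    and "\<And>t. \<bar>h' t\<bar> \<le> weyl_norm h * sqrt (real (hdeg h))"
proof
  show "((\<lambda>t. heval h (great_circle y v t)) has_field_derivative
          (\<Sum>a\<in>monomials_deg (hdeg h). hcoeff h a * monomial_circle_deriv y v a t)) (at t)" for t
    unfolding heval_eq_sum_monomial
    by (intro DERIV_sum DERIV_cmult has_field_derivative_monomial_great_circle)
  show "\<bar>\<Sum>a\<in>monomials_deg (hdeg h). hcoeff h a * monomial_circle_deriv y v a t\<bar>
          \<le> weyl_norm h * sqrt (real (hdeg h))" for t
    using weyl_cauchy_schwarz[of h "\<lambda>a. monomial_circle_deriv y v a t"]
      weyl_sum_monomial_circle_deriv_sq[OF assms, of "hdeg h" t] by simp
qed

lemma great_circle_through:
  fixes x y :: "real^'n::finite"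
  assumes "norm x = 1" "norm y = 1" "-1 < x \<bullet> y" "x \<bullet> y < 1"
  obtains v where "norm v = 1" "y \<bullet> v = 0" "great_circle y v (dS x y) = x"
    "0 < dS x y" "dS x y < pi"
proof -
  define c where "c = x \<bullet> y"
  define s where "s = sin (dS x y)"
  have xx: "x \<bullet> x = 1" and yy: "y \<bullet> y = 1" using assms by (simp_all add: dot_square_norm)
  have angle: "0 < dS x y" "dS x y < pi"
    using assms arccos_lt_bounded by (auto simp: dS_def)
  have cos_angle: "cos (dS x y) = c" using assms by (simp add: dS_def c_def)
  have "s > 0" using sin_gt_zero angle by (simp add: s_def)
  have s2: "s\<^sup>2 = 1 - c\<^sup>2" using cos_angle sin_squared_eq[of "dS x y"] by (simp add: s_def)
  define v where "v = (1/s) *\<^sub>R (x - c *\<^sub>R y)"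
  have "y \<bullet> v = 0"
    by (simp add: v_def inner_diff_right yy c_def inner_commute)
  moreover have "v \<bullet> v = (1/s)\<^sup>2 * (1 - c\<^sup>2)"
    by (simp add: v_def inner_diff_right inner_diff_left xx yy c_def inner_commute
        power2_eq_square algebra_simps)
  then have "v \<bullet> v = 1"
    unfolding s2[symmetric] using \<open>s > 0\<close> by (simp add: power_divide)
  then have "norm v = 1"
    by (simp add: norm_eq_sqrt_inner)
  moreover have "great_circle y v (dS x y) = x"
    using \<open>s > 0\<close> cos_angle by (simp add: great_circle_def v_def s_def scaleR_diff_right)
  ultimately show ?thesis using that angle by blast
qed

lemma abs_heval_diff_le_dS:
  fixes x y :: "real^'n::finite" and h :: "'n hpoly"
  assumes x: "norm x = 1" and y: "norm y = 1" and "hdeg h \<ge> 1"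
  shows "\<bar>heval h x - heval h y\<bar> \<le> sqrt (real (hdeg h)) * weyl_norm h * dS x y"
proof -
  let ?L = "sqrt (real (hdeg h)) * weyl_norm h"
  have "sqrt (real (hdeg h)) \<ge> 1" using assms by simp
  from mult_right_mono[OF this weyl_norm_nonneg] have L: "weyl_norm h \<le> ?L"
    by simp
  have "\<bar>x \<bullet> y\<bar> \<le> 1" using Cauchy_Schwarz_ineq2[of x y] x y by simp
  then consider "x \<bullet> y = 1" | "x \<bullet> y = -1" | "-1 < x \<bullet> y" "x \<bullet> y < 1" by linarith
  then show ?thesis
  proof cases
    case 1
    have "(norm (x - y))\<^sup>2 = x \<bullet> x + y \<bullet> y - 2 * (x \<bullet> y)"
      by (simp add: power2_norm_eq_inner inner_diff_left inner_diff_right inner_commute)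
    also have "\<dots> = 0"
      using x y 1 by (simp add: dot_square_norm)
    finally show ?thesis using 1 by (simp add: dS_def)
  next
    case 2 \<comment> \<open>antipodal points: no great circle is singled out (none exists in dimension one),
      but \<open>dS x y = pi\<close> is large enough for the crude bound \<open>2 \<parallel>h\<parallel>\<close>\<close>
    have "\<bar>heval h x - heval h y\<bar> \<le> 2 * weyl_norm h"
      using abs_heval_le_weyl_norm[OF x, of h] abs_heval_le_weyl_norm[OF y, of h] by linarith
    also have "\<dots> \<le> pi * weyl_norm h"
      using pi_gt3 weyl_norm_nonneg[of h] by (intro mult_right_mono) auto
    also have "\<dots> \<le> pi * ?L"
      using L by (intro mult_left_mono) auto
    also have "\<dots> = ?L * pi"
      by (rule mult.commute)
    finally show ?thesis using 2 by (simp add: dS_def)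
  next
    case 3
    obtain v where v: "norm v = 1" "y \<bullet> v = 0" "great_circle y v (dS x y) = x"
      and angle: "0 < dS x y" "dS x y < pi"
      using great_circle_through[OF x y 3] .
    obtain h' where h': "\<And>t. ((\<lambda>t. heval h (great_circle y v t)) has_field_derivative h' t) (at t)"
      and bound: "\<And>t. \<bar>h' t\<bar> \<le> weyl_norm h * sqrt (real (hdeg h))"
      using heval_great_circle_deriv[OF y v(1,2), of h] by blast
    obtain t where "heval h (great_circle y v (dS x y)) - heval h (great_circle y v 0) = dS x y * h' t"
      using MVT2[OF angle(1) h'] by auto
    then have "\<bar>heval h x - heval h y\<bar> = dS x y * \<bar>h' t\<bar>"
      using v(3) angle by (simp add: great_circle_def abs_mult)
    also have "\<dots> \<le> dS x y * ?L"
      using bound[of t] angle by (intro mult_left_mono) (auto simp: mult.commute)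
    finally show ?thesis by (simp add: mult.commute)
  qed
qed

lemma abs_heval_diff_less:
  fixes x y :: "real^'n::finite" and h :: "'n hpoly"
  assumes "norm x = 1" "norm y = 1" "1 \<le> hdeg h" "hdeg h \<le> D" "\<not> hzero h"
    and close: "dS x y < r / sqrt (real D)"
  shows "\<bar>heval h x - heval h y\<bar> < weyl_norm h * r"
proof -
  have D: "sqrt (real D) > 0" using assms(3,4) by simp
  have "\<bar>x \<bullet> y\<bar> \<le> 1" using Cauchy_Schwarz_ineq2[of x y] assms(1,2) by simp
  then have dS_nonneg: "dS x y \<ge> 0" unfolding dS_def by (intro arccos_lbound) auto
  have w: "weyl_norm h > 0" using weyl_norm_pos assms(5) by blast
  have "\<bar>heval h x - heval h y\<bar> \<le> sqrt (real (hdeg h)) * weyl_norm h * dS x y"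
    using abs_heval_diff_le_dS assms(1-3) by blast
  also have "\<dots> \<le> sqrt (real D) * weyl_norm h * dS x y"
    using assms(4) dS_nonneg w by (intro mult_right_mono) auto
  also have "\<dots> = weyl_norm h * (sqrt (real D) * dS x y)"
    by simp
  also have "\<dots> < weyl_norm h * r"
    using close D w by (intro mult_strict_left_mono) (auto simp: field_simps)
  finally show ?thesis .
qed

theorem proposition4p17:
  fixes F G :: "('n::finite) hpoly list" and r :: real and D :: nat
  assumes "\<forall>h\<in>set (F @ G). hdeg h \<ge> 1"
    and "\<forall>h\<in>set (F @ G). \<not> hzero h"
    and "F @ G \<noteq> []"
    and "D = Max (hdeg ` set (F @ G))"
    and "r > 0"
  shows "U_S (SFG F G) (r / sqrt (real D)) \<subseteq> Approx F G r"
proof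
  fix x assume "x \<in> U_S (SFG F G) (r / sqrt (real D))"
  then obtain y where x: "norm x = 1" and y: "y \<in> SFG F G" and close: "dS x y < r / sqrt (real D)"
    by (auto simp: U_S_def sphere_n_def)
  have "norm y = 1" using y by (simp add: SFG_def sphere_n_def)
  then have diff: "\<bar>heval h x - heval h y\<bar> < weyl_norm h * r" if "h \<in> set (F @ G)" for h
    using abs_heval_diff_less[OF x _ _ _ _ close] assms(1,2,4) that by simp
  show "x \<in> Approx F G r"
    using x y diff by (force simp: Approx_def SFG_def sphere_n_def)
qed

end
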